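(* Let $c\ge 3$ be an integer with distinct prime factors $q_1,\dots,q_\omega$. Then $$G_c \;=\; R(c)^{\varphi(c)/2}\prod_{\substack{2\le p<c,\ p \text{ prime}\\ (p,c)=1}} p^{E_c(p)}.$$
   Context: For a positive integer $n$, $R(n)$ denotes its radical, the product of the distinct primes dividing $n$ (with $R(1)=1$). $\varphi$ is Euler's totient function. For an integer $c\ge 3$, consider all pairs of positive integers $(a,b)$ with $a+b=c$, $a<b$, $\gcd(a,b)=1$; there are $\varphi(c)/2$ of them, and $G_c$ is the product of $R(abc)$ over all these pairs. For a positive integer $n$ with distinct prime factors $q_1,\dots,q_\omega$ ($\omega=0$ if $n=1$) and a real number $x\neq 0$, define $$E_n(x)=\sum_{S\subseteq\{1,\dots,\omega\}}(-1)^{|S|}\left\lfloor \frac{n}{x\prod_{i\in S}q_i}\right\rfloor,$$ i.e. $\lfloor n/x\rfloor-\sum_i\lfloor n/(xq_i)\rfloor+\sum_{i<j}\lfloor n/(xq_iq_j)\rfloor-\cdots+(-1)^\omega\lfloor n/(xq_1\cdots q_\omega)\rfloor$. *)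

theory Defs
  imports "HOL-Number_Theory.Number_Theory"
begin

definition rad :: "nat \<Rightarrow> nat" where
  "rad n = (\<Prod>p\<in>prime_factors n. p)"

definition G :: "nat \<Rightarrow> nat" where
  "G c = (\<Prod>(a,b)\<in>{(a,b). 0 < a \<and> 0 < b \<and> a + b = c \<and> a < b \<and> coprime a b}. rad (a * b * c))"

definition E :: "nat \<Rightarrow> real \<Rightarrow> int" where
  "E n x = (\<Sum>S\<in>Pow (prime_factors n).
              (-1) ^ card S * \<lfloor>real n / (x * real (\<Prod>q\<in>S. q))\<rfloor>)"

end

theory Submission
  imports Defs
begin

(*
  A pair (a, b) counted in G_c is (a, c - a) for a totative a of c with 2 a < c, and a, c - a, c
  are pairwise coprime, so R(a b c) = R(a) R(c - a) R(c).  Since a \<mapsto> c - a swaps the lower and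
  upper halves of the totatives (for c \<ge> 3 none lies in the middle), G_c is R(c)^(\<phi>(c)/2) times
  the product of R(a) over all totatives a of c.  A prime p < c coprime to c occurs in that
  product once for each totative p k, i.e. for each k \<le> c / p coprime to c, and
  inclusion-exclusion over the prime factors of c counts these k as E_c(p).
*)

lemma coprime_iff_no_prime_factor_dvd:
  fixes k n :: nat
  assumes "n > 0"
  shows "coprime k n \<longleftrightarrow> (\<forall>q\<in>prime_factors n. \<not> q dvd k)"
proof
  assume "coprime k n"
  show "\<forall>q\<in>prime_factors n. \<not> q dvd k"
  proof (intro ballI notI)
    fix q assume "q \<in> prime_factors n" "q dvd k"
    then have "prime q" "q dvd k" "q dvd n"
      by auto
    with \<open>coprime k n\<close> show False
      using coprime_common_divisor not_prime_unit by blast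
  qed
next
  assume "\<forall>q\<in>prime_factors n. \<not> q dvd k"
  then show "coprime k n"
  proof (rule contrapos_pp)
    assume "\<not> coprime k n"
    then obtain q where "prime q" "q dvd k" "q dvd n"
      using prime_factor_nat[of "gcd k n"] by fastforce
    with assms show "\<not> (\<forall>q\<in>prime_factors n. \<not> q dvd k)"
      by (auto simp: in_prime_factors_iff)
  qed
qed

lemma card_multiples_atLeastAtMost:
  fixes d N :: nat and P :: "nat \<Rightarrow> bool"
  assumes "d > 0" and "\<And>k. P (d * k) \<longleftrightarrow> P k"
  shows "card {a\<in>{1..N}. P a \<and> d dvd a} = card {k\<in>{1..N div d}. P k}"
proof -
  have "{a\<in>{1..N}. P a \<and> d dvd a} = (\<lambda>k. d * k) ` {k\<in>{1..N div d}. P k}"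
  proof (intro equalityI subsetI)
    fix a assume "a \<in> {a\<in>{1..N}. P a \<and> d dvd a}"
    then obtain k where a: "a = d * k" "1 \<le> a" "a \<le> N" "P a" by auto
    then have "k \<in> {k\<in>{1..N div d}. P k}"
      using assms by (auto simp: less_eq_div_iff_mult_less_eq mult.commute)
    then show "a \<in> (\<lambda>k. d * k) ` {k\<in>{1..N div d}. P k}"
      using a(1) by blast
  next
    fix a assume "a \<in> (\<lambda>k. d * k) ` {k\<in>{1..N div d}. P k}"
    with assms show "a \<in> {a\<in>{1..N}. P a \<and> d dvd a}"
      by (auto simp: less_eq_div_iff_mult_less_eq mult.commute)
  qed
  moreover have "inj_on (\<lambda>k. d * k) {k\<in>{1..N div d}. P k}"
    using assms(1) by (auto simp: inj_on_def)
  ultimately show ?thesis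
    by (simp add: card_image)
qed

lemma sum_Pow_insert:
  assumes "finite A" "x \<notin> A"
  shows "(\<Sum>S\<in>Pow (insert x A). f S) = (\<Sum>S\<in>Pow A. f S) + (\<Sum>S\<in>Pow A. f (insert x S))"
proof -
  have "inj_on (insert x) (Pow A)"
    using assms(2) by (auto simp: inj_on_def)
  with assms show ?thesis
    unfolding Pow_insert by (subst sum.union_disjoint) (auto simp: sum.reindex)
qed

lemma card_no_prime_dvd_insert:
  fixes Q :: "nat set"
  assumes "\<And>p. p \<in> Q \<Longrightarrow> prime p" "prime q" "q \<notin> Q"
  shows "card {k\<in>{1..N}. \<forall>p\<in>Q. \<not> p dvd k} =
           card {k\<in>{1..N}. \<forall>p\<in>insert q Q. \<not> p dvd k} + card {k\<in>{1..N div q}. \<forall>p\<in>Q. \<not> p dvd k}"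
proof -
  have "p dvd q * k \<longleftrightarrow> p dvd k" if "p \<in> Q" for p k
  proof -
    have "prime p" "p \<noteq> q"
      using that assms by auto
    with \<open>prime q\<close> have "\<not> p dvd q"
      using primes_dvd_imp_eq by blast
    with \<open>prime p\<close> show ?thesis
      by (simp add: prime_dvd_mult_iff)
  qed
  then have multiples: "card {k\<in>{1..N}. (\<forall>p\<in>Q. \<not> p dvd k) \<and> q dvd k} =
                          card {k\<in>{1..N div q}. \<forall>p\<in>Q. \<not> p dvd k}"
    using \<open>prime q\<close> by (intro card_multiples_atLeastAtMost) (simp_all add: prime_gt_0_nat)
  have "card {k\<in>{1..N}. \<forall>p\<in>Q. \<not> p dvd k} =
          card ({k\<in>{1..N}. \<forall>p\<in>insert q Q. \<not> p dvd k} \<union> {k\<in>{1..N}. (\<forall>p\<in>Q. \<not> p dvd k) \<and> q dvd k})"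
    by (rule arg_cong[where f = card]) auto
  also have "\<dots> = card {k\<in>{1..N}. \<forall>p\<in>insert q Q. \<not> p dvd k} +
                   card {k\<in>{1..N}. (\<forall>p\<in>Q. \<not> p dvd k) \<and> q dvd k}"
    by (rule card_Un_disjoint) auto
  finally show ?thesis
    by (simp only: multiples)
qed

lemma card_no_prime_dvd_inclusion_exclusion:
  fixes Q :: "nat set"
  assumes "finite Q" and "\<And>q. q \<in> Q \<Longrightarrow> prime q"
  shows "int (card {k\<in>{1..N}. \<forall>q\<in>Q. \<not> q dvd k}) =
           (\<Sum>S\<in>Pow Q. (-1) ^ card S * int (N div \<Prod>S))"
  using assms
proof (induction Q arbitrary: N rule: finite_induct)
  case empty
  have "{k\<in>{1..N}. \<forall>q\<in>{}. \<not> q dvd k} = {1..N}"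
    by auto
  then show ?case
    by simp
next
  case (insert q Q)
  define g where "g M S = (-1) ^ card S * int (M div \<Prod>S)" for M and S :: "nat set"
  have IH: "int (card {k\<in>{1..M}. \<forall>p\<in>Q. \<not> p dvd k}) = (\<Sum>S\<in>Pow Q. g M S)" for M
    using insert unfolding g_def by simp
  have "int (card {k\<in>{1..N}. \<forall>p\<in>insert q Q. \<not> p dvd k}) =
          int (card {k\<in>{1..N}. \<forall>p\<in>Q. \<not> p dvd k}) - int (card {k\<in>{1..N div q}. \<forall>p\<in>Q. \<not> p dvd k})"
    using card_no_prime_dvd_insert[of Q q N] insert by simp
  also have "\<dots> = (\<Sum>S\<in>Pow Q. g N S) + (\<Sum>S\<in>Pow Q. g N (insert q S))"
  proof -
    have "g N (insert q S) = - g (N div q) S" if "S \<in> Pow Q" for S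
    proof -
      have "finite S" "q \<notin> S"
        using that insert.hyps finite_subset by auto
      then show ?thesis
        by (simp add: g_def div_mult2_eq)
    qed
    then show ?thesis
      unfolding IH by (simp add: sum_negf)
  qed
  also have "\<dots> = (\<Sum>S\<in>Pow (insert q Q). g N S)"
    using insert.hyps by (rule sum_Pow_insert[symmetric])
  finally show ?case
    by (simp add: g_def)
qed

corollary card_coprime_inclusion_exclusion:
  fixes n N :: nat
  assumes "n > 0"
  shows "int (card {k\<in>{1..N}. coprime k n}) =
           (\<Sum>S\<in>Pow (prime_factors n). (-1) ^ card S * int (N div \<Prod>S))"
proof -
  have "{k\<in>{1..N}. coprime k n} = {k\<in>{1..N}. \<forall>q\<in>prime_factors n. \<not> q dvd k}"
    using coprime_iff_no_prime_factor_dvd[OF assms] by blast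
  moreover have "int (card {k\<in>{1..N}. \<forall>q\<in>prime_factors n. \<not> q dvd k}) =
                   (\<Sum>S\<in>Pow (prime_factors n). (-1) ^ card S * int (N div \<Prod>S))"
    by (rule card_no_prime_dvd_inclusion_exclusion) auto
  ultimately show ?thesis
    by simp
qed

lemma card_totatives_multiples:
  fixes d n :: nat
  assumes "d > 0" and "coprime d n"
  shows "card {a\<in>totatives n. d dvd a} = card {k\<in>{1..n div d}. coprime k n}"
proof -
  have "{a\<in>totatives n. d dvd a} = {a\<in>{1..n}. coprime a n \<and> d dvd a}"
    by (auto simp: in_totatives_iff)
  with assms show ?thesis
    using card_multiples_atLeastAtMost[where P = "\<lambda>a. coprime a n"] by simp
qed

lemma E_eq_card_totatives_multiples:
  fixes d n :: nat
  assumes "n > 0" "d > 0" "coprime d n"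
  shows "E n (real d) = int (card {a\<in>totatives n. d dvd a})"
proof -
  have "E n (real d) = (\<Sum>S\<in>Pow (prime_factors n). (-1) ^ card S * int (n div d div \<Prod>S))"
    unfolding E_def
  proof (rule sum.cong)
    fix S :: "nat set"
    have "\<lfloor>real n / (real d * real (\<Prod>q\<in>S. q))\<rfloor> = \<lfloor>real n / real (d * \<Prod>S)\<rfloor>"
      by simp
    also have "\<dots> = int (n div d div \<Prod>S)"
      by (simp only: floor_divide_of_nat_eq div_mult2_eq)
    finally show "(-1) ^ card S * \<lfloor>real n / (real d * real (\<Prod>q\<in>S. q))\<rfloor> =
                  (-1) ^ card S * int (n div d div \<Prod>S)"
      by simp
  qed simp
  also have "\<dots> = int (card {k\<in>{1..n div d}. coprime k n})"
    by (rule card_coprime_inclusion_exclusion[OF assms(1), symmetric])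
  also have "\<dots> = int (card {a\<in>totatives n. d dvd a})"
    by (simp add: card_totatives_multiples assms)
  finally show ?thesis .
qed

lemma rad_mult_coprime:
  fixes x y :: nat
  assumes "x \<noteq> 0" "y \<noteq> 0" "coprime x y"
  shows "rad (x * y) = rad x * rad y"
proof -
  have "prime_factors x \<inter> prime_factors y = {}"
  proof (intro equals0I)
    fix q assume "q \<in> prime_factors x \<inter> prime_factors y"
    then have "prime q" "q dvd x" "q dvd y"
      by auto
    with assms(3) show False
      using coprime_common_divisor not_prime_unit by blast
  qed
  with assms show ?thesis
    unfolding rad_def by (simp add: prime_factors_product prod.union_disjoint)
qed

lemma prod_rad_eq_prod_prime_powers:
  fixes A P :: "nat set"
  assumes "finite A" "finite P" "\<And>p. p \<in> P \<Longrightarrow> prime p"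
    and "0 \<notin> A" "\<And>a. a \<in> A \<Longrightarrow> prime_factors a \<subseteq> P"
  shows "(\<Prod>a\<in>A. rad a) = (\<Prod>p\<in>P. p ^ card {a\<in>A. p dvd a})"
proof -
  have "rad a = (\<Prod>p\<in>P. if p dvd a then p else 1)" if "a \<in> A" for a
  proof -
    have "a \<noteq> 0"
      using assms(4) that by metis
    with assms that have "prime_factors a = {p\<in>P. p dvd a}"
      by (auto simp: in_prime_factors_iff)
    then show ?thesis
      unfolding rad_def using assms(2) by (simp add: prod.inter_filter)
  qed
  then have "(\<Prod>a\<in>A. rad a) = (\<Prod>p\<in>P. \<Prod>a\<in>A. if p dvd a then p else 1)"
    by (simp add: prod.swap[of _ P])
  also have "\<dots> = (\<Prod>p\<in>P. p ^ card {a\<in>A. p dvd a})"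
    using assms(1) by (simp add: prod.inter_filter[symmetric])
  finally show ?thesis .
qed

lemma coprime_diff_left_iff_nat:
  fixes a n :: nat
  assumes "a \<le> n"
  shows "coprime (n - a) n \<longleftrightarrow> coprime a n"
  by (simp only: coprime_iff_gcd_eq_1 gcd_diff2_nat[OF assms])

lemma coprime_diff_right_iff_nat:
  fixes a n :: nat
  assumes "a \<le> n"
  shows "coprime a (n - a) \<longleftrightarrow> coprime a n"
proof -
  have "gcd a (n - a) = gcd a n"
    using gcd_add2[of a "n - a"] assms by simp
  then show ?thesis
    by (simp only: coprime_iff_gcd_eq_1)
qed

lemma diff_in_totatives:
  fixes a n :: nat
  assumes "a \<in> totatives n" "a < n"
  shows "n - a \<in> totatives n"
  using assms by (simp add: in_totatives_iff coprime_diff_left_iff_nat)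

definition lower_totatives :: "nat \<Rightarrow> nat set" where
  "lower_totatives n = {a\<in>totatives n. 2 * a < n}"

lemma totatives_eq_lower_Un_reflected:
  assumes "n \<ge> 3"
  shows "totatives n = lower_totatives n \<union> (\<lambda>a. n - a) ` lower_totatives n"
proof (intro equalityI subsetI)
  fix a assume a: "a \<in> totatives n"
  have "a \<noteq> n"
    using a assms by (auto simp: in_totatives_iff)
  moreover have "2 * a \<noteq> n"
  proof
    assume n: "2 * a = n"
    with a have "coprime a (2 * a)"
      by (simp add: in_totatives_iff)
    then have "a = 1"
      by simp
    with n assms show False
      by simp
  qed
  ultimately consider "2 * a < n" | "n < 2 * a" "a < n"
    using totatives_le[OF a] by linarith
  then show "a \<in> lower_totatives n \<union> (\<lambda>a. n - a) ` lower_totatives n"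
  proof cases
    case 2
    then have "n - a \<in> lower_totatives n"
      using a diff_in_totatives by (auto simp: lower_totatives_def)
    moreover have "a = n - (n - a)"
      using 2 by simp
    ultimately show ?thesis
      by blast
  qed (use a in \<open>auto simp: lower_totatives_def\<close>)
next
  fix a assume "a \<in> lower_totatives n \<union> (\<lambda>a. n - a) ` lower_totatives n"
  then show "a \<in> totatives n"
    by (auto simp: lower_totatives_def diff_in_totatives)
qed

lemma inj_on_reflect_lower_totatives: "inj_on (\<lambda>a. n - a) (lower_totatives n)"
  by (auto simp: inj_on_def lower_totatives_def in_totatives_iff)

lemma card_lower_totatives:
  assumes "n \<ge> 3"
  shows "card (lower_totatives n) = totient n div 2"
proof -
  have "totient n = card (lower_totatives n) + card ((\<lambda>a. n - a) ` lower_totatives n)"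
    unfolding totient_def totatives_eq_lower_Un_reflected[OF assms]
    by (rule card_Un_disjoint) (auto simp: lower_totatives_def)
  then show ?thesis
    by (simp add: card_image inj_on_reflect_lower_totatives)
qed

lemma prod_totatives_eq_prod_lower_pairs:
  fixes f :: "nat \<Rightarrow> 'a::comm_monoid_mult"
  assumes "n \<ge> 3"
  shows "(\<Prod>a\<in>totatives n. f a) = (\<Prod>a\<in>lower_totatives n. f a * f (n - a))"
proof -
  have "(\<Prod>a\<in>totatives n. f a) =
          (\<Prod>a\<in>lower_totatives n. f a) * (\<Prod>a\<in>(\<lambda>a. n - a) ` lower_totatives n. f a)"
    unfolding totatives_eq_lower_Un_reflected[OF assms]
    by (rule prod.union_disjoint) (auto simp: lower_totatives_def)
  then show ?thesis
    by (simp add: prod.reindex inj_on_reflect_lower_totatives prod.distrib)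
qed

lemma G_eq_prod_lower_totatives:
  "G c = (\<Prod>a\<in>lower_totatives c. rad (a * (c - a) * c))"
proof -
  have "{(a, b). 0 < a \<and> 0 < b \<and> a + b = c \<and> a < b \<and> coprime a b} =
          (\<lambda>a. (a, c - a)) ` lower_totatives c"
  proof (intro equalityI subsetI)
    fix x assume "x \<in> {(a, b). 0 < a \<and> 0 < b \<and> a + b = c \<and> a < b \<and> coprime a b}"
    then obtain a b where x: "x = (a, b)" "0 < a" "a + b = c" "a < b" "coprime a b"
      by blast
    then have "a \<in> lower_totatives c"
      using coprime_diff_right_iff_nat[of a c] by (auto simp: lower_totatives_def in_totatives_iff)
    with x show "x \<in> (\<lambda>a. (a, c - a)) ` lower_totatives c"
      by force
  next
    fix x assume "x \<in> (\<lambda>a. (a, c - a)) ` lower_totatives c"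
    then obtain a where "x = (a, c - a)" "a \<in> lower_totatives c"
      by blast
    then show "x \<in> {(a, b). 0 < a \<and> 0 < b \<and> a + b = c \<and> a < b \<and> coprime a b}"
      using coprime_diff_right_iff_nat[of a c] by (auto simp: lower_totatives_def in_totatives_iff)
  qed
  moreover have "inj_on (\<lambda>a. (a, c - a)) (lower_totatives c)"
    by (simp add: inj_on_def)
  ultimately show ?thesis
    unfolding G_def by (simp add: prod.reindex)
qed

lemma rad_mult_complement:
  assumes "a \<in> totatives c" "a < c"
  shows "rad (a * (c - a) * c) = rad a * rad (c - a) * rad c"
proof -
  have "0 < a" "coprime a c"
    using assms by (auto simp: in_totatives_iff)
  moreover have "coprime (c - a) c" "coprime a (c - a)"
    using \<open>coprime a c\<close> assms(2)
    by (simp_all add: coprime_diff_left_iff_nat coprime_diff_right_iff_nat)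
  ultimately show ?thesis
    using assms(2) by (simp add: rad_mult_coprime)
qed

lemma G_eq_rad_power_prod_rad_totatives:
  assumes "c \<ge> 3"
  shows "G c = rad c ^ (totient c div 2) * (\<Prod>a\<in>totatives c. rad a)"
proof -
  have "G c = (\<Prod>a\<in>lower_totatives c. rad a * rad (c - a) * rad c)"
    unfolding G_eq_prod_lower_totatives
    by (intro prod.cong) (auto simp: lower_totatives_def rad_mult_complement)
  also have "\<dots> = rad c ^ card (lower_totatives c) * (\<Prod>a\<in>lower_totatives c. rad a * rad (c - a))"
    by (simp add: prod.distrib mult.commute)
  also have "\<dots> = rad c ^ (totient c div 2) * (\<Prod>a\<in>totatives c. rad a)"
    using assms by (simp add: card_lower_totatives prod_totatives_eq_prod_lower_pairs)
  finally show ?thesis .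
qed

lemma prod_rad_totatives:
  "(\<Prod>a\<in>totatives c. rad a) =
     (\<Prod>p\<in>{p. prime p \<and> 2 \<le> p \<and> p < c \<and> coprime p c}. p ^ card {a\<in>totatives c. p dvd a})"
proof (rule prod_rad_eq_prod_prime_powers)
  show "finite {p. prime p \<and> 2 \<le> p \<and> p < c \<and> coprime p c}"
    by (rule finite_subset[of _ "{..<c}"]) auto
next
  fix a assume a: "a \<in> totatives c"
  show "prime_factors a \<subseteq> {p. prime p \<and> 2 \<le> p \<and> p < c \<and> coprime p c}"
  proof
    fix q assume "q \<in> prime_factors a"
    then have "prime q" "q dvd a" "a \<noteq> 0"
      by (auto simp: in_prime_factors_iff)
    moreover have "coprime q c"
    proof -
      obtain k where "a = q * k"
        using \<open>q dvd a\<close> ..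
      with a show ?thesis
        by (simp add: in_totatives_iff)
    qed
    moreover from this \<open>prime q\<close> have "q \<noteq> c"
      by (metis coprime_self not_prime_unit)
    moreover have "q \<le> c"
      using dvd_imp_le[OF \<open>q dvd a\<close>] \<open>a \<noteq> 0\<close> totatives_le[OF a] by simp
    ultimately show "q \<in> {p. prime p \<and> 2 \<le> p \<and> p < c \<and> coprime p c}"
      by (simp add: prime_ge_2_nat)
  qed
qed auto

theorem theorem1:
  fixes c :: nat
  assumes "c \<ge> 3"
  shows "real (G c) =
    real (rad c) ^ (totient c div 2) *
    (\<Prod>p\<in>{p. prime p \<and> 2 \<le> p \<and> p < c \<and> coprime p c}. real p powi E c (real p))"
proof -
  have "real p powi E c (real p) = real p ^ card {a\<in>totatives c. p dvd a}"
    if "p \<in> {p. prime p \<and> 2 \<le> p \<and> p < c \<and> coprime p c}" for p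
    using that assms by (simp add: E_eq_card_totatives_multiples prime_gt_0_nat)
  then show ?thesis
    using assms by (simp add: G_eq_rad_power_prod_rad_totatives prod_rad_totatives)
qed

end
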